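(* Let $n\ge 2$ be an integer and $A\subseteq L_n$. Then: (a) $(X_n,\tau(A))$ is perfect if and only if $A$ is a $G_\delta$-set in $(L_n,\tau_E|_{L_n})$; (b) $(X_n,\tau(A))$ is Lindelöf if and only if $L_n\setminus A$ does not contain a closed uncountable subset of $(L_n,\tau_E|_{L_n})$; (c) $(X_n,\tau(A))$ is $\sigma$-compact if and only if $A$ is an $F_\sigma$-set in $(L_n,\tau_E|_{L_n})$ and $|L_n\setminus A|\le\aleph_0$.
   Context: For $\overline{x},\overline{a}\in\mathbb R^n$ let $|\overline{x}-\overline{a}|$ be the Euclidean distance and $B(\overline{a},\epsilon)=\{\overline{x}\in\mathbb R^n:|\overline{x}-\overline{a}|<\epsilon\}$. Let $P_n=\{\overline{x}\in\mathbb R^n: x_n>0\}$, $L_n=\{\overline{x}\in\mathbb R^n: x_n=0\}$, $X_n=P_n\cup L_n$, and let $\tau_E$ denote the Euclidean topology on $X_n$ (so $(L_n,\tau_E|_{L_n})\cong\mathbb R^{n-1}$). For $\overline{a}\in L_n$ and $\epsilon>0$ put $\overline{a(\epsilon)}=(a_1,\dots,a_{n-1},\epsilon)$ and $\tilde B(\overline{a},\epsilon)=\{\overline{a}\}\cup B(\overline{a(\epsilon)},\epsilon)$. For $A\subseteq L_n$, the topology $\tau(A)$ on $X_n$ is generated by the local bases: at $\overline{a}\in P_n$, the sets $B(\overline{a},\epsilon)$ with $0<\epsilon<a_n$; at $\overline{a}\in A$, the sets $B(\overline{a},\epsilon)\cap X_n$ with $\epsilon>0$; at $\overline{a}\in L_n\setminus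 A$, the sets $\tilde B(\overline{a},\epsilon)$ with $\epsilon>0$. A space is perfect if every closed set is a $G_\delta$-set. *)

theory Defs
  imports "HOL-Analysis.Analysis"
begin

text \<open>Points of R^n are modelled as pairs (u, t) :: (real^'m) \<times> real, where u collects the
  first n-1 coordinates and t is the last coordinate x_n; thus n = CARD('m) + 1 \<ge> 2.
  The metric on the product type is the Euclidean one (dist_Pair_Pair).\<close>

definition Pn :: "((real^'m) \<times> real) set" where
  "Pn = {p. snd p > 0}"

definition Ln :: "((real^'m) \<times> real) set" where
  "Ln = {p. snd p = 0}"

definition Xn :: "((real^'m) \<times> real) set" where
  "Xn = Pn \<union> Ln"

definition tball :: "(real^'m) \<times> real \<Rightarrow> real \<Rightarrow> ((real^'m) \<times> real) set" where
  "tball a e = insert a (ball (fst a, e) e)"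

definition nbhd :: "((real^'m) \<times> real) set \<Rightarrow> (real^'m) \<times> real \<Rightarrow> real \<Rightarrow> ((real^'m) \<times> real) set" where
  "nbhd A a e = (if a \<in> Pn then ball a e
                  else if a \<in> A then ball a e \<inter> Xn
                  else tball a e)"

definition admissible :: "(real^'m) \<times> real \<Rightarrow> real \<Rightarrow> bool" where
  "admissible a e \<longleftrightarrow> e > 0 \<and> (a \<in> Pn \<longrightarrow> e < snd a)"

definition tauA :: "((real^'m) \<times> real) set \<Rightarrow> ((real^'m) \<times> real) topology" where
  "tauA A = topology (\<lambda>U. U \<subseteq> Xn \<and> (\<forall>a\<in>U. \<exists>e. admissible a e \<and> nbhd A a e \<subseteq> U))"

definition perfect_top :: "'a topology \<Rightarrow> bool" where
  "perfect_top T \<longleftrightarrow> (\<forall>C. closedin T C \<longrightarrow> gdelta_in T C)"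

definition sigma_compact_space :: "'a topology \<Rightarrow> bool" where
  "sigma_compact_space T \<longleftrightarrow>
     (\<exists>\<K>. countable \<K> \<and> (\<forall>K\<in>\<K>. compactin T K) \<and> \<Union>\<K> = topspace T)"

lemma nbhd_mono:
  assumes "0 < e" "e \<le> e'"
  shows "nbhd A a e \<subseteq> nbhd A a e'"
proof -
  have "ball (fst a, e) e \<subseteq> ball (fst a, e') e'"
  proof
    fix y assume "y \<in> ball (fst a, e) e"
    hence "dist (fst a, e) y < e" by simp
    moreover have "dist (fst a, e') (fst a, e) = e' - e"
      using assms by (simp add: dist_Pair_Pair dist_real_def)
    ultimately show "y \<in> ball (fst a, e') e'"
      using dist_triangle[of "(fst a, e')" y "(fst a, e)"] by simp
  qed
  thus ?thesis using assms subset_ball[of e e' a] unfolding nbhd_def tball_def by (auto simp del: mem_ball)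
qed

lemma istopology_tauA:
  "istopology (\<lambda>U. U \<subseteq> Xn \<and> (\<forall>a\<in>U. \<exists>e. admissible a e \<and> nbhd A a e \<subseteq> U))"
  unfolding istopology_def
proof (intro conjI allI impI)
  fix S T assume "S \<subseteq> Xn \<and> (\<forall>a\<in>S. \<exists>e. admissible a e \<and> nbhd A a e \<subseteq> S)"
  then show "S \<inter> T \<subseteq> Xn" by blast
next
  fix S T assume S: "S \<subseteq> Xn \<and> (\<forall>a\<in>S. \<exists>e. admissible a e \<and> nbhd A a e \<subseteq> S)"
    and T: "T \<subseteq> Xn \<and> (\<forall>a\<in>T. \<exists>e. admissible a e \<and> nbhd A a e \<subseteq> T)"
  have "\<exists>e. admissible a e \<and> nbhd A a e \<subseteq> S \<inter> T" if a: "a \<in> S \<inter> T" for a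
  proof -
    obtain e1 where e1: "admissible a e1" "nbhd A a e1 \<subseteq> S" using S a by blast
    obtain e2 where e2: "admissible a e2" "nbhd A a e2 \<subseteq> T" using T a by blast
    have "admissible a (min e1 e2)" using e1 e2 unfolding admissible_def by auto
    moreover have "nbhd A a (min e1 e2) \<subseteq> S \<inter> T"
      using nbhd_mono[of "min e1 e2" e1 A a] nbhd_mono[of "min e1 e2" e2 A a] e1 e2
      unfolding admissible_def by auto
    ultimately show ?thesis by blast
  qed
  then show "\<forall>a\<in>S \<inter> T. \<exists>e. admissible a e \<and> nbhd A a e \<subseteq> S \<inter> T"
    by blast
next
  fix K assume K: "\<forall>U\<in>K. U \<subseteq> Xn \<and> (\<forall>a\<in>U. \<exists>e. admissible a e \<and> nbhd A a e \<subseteq> U)"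
  then show "\<Union>K \<subseteq> Xn" by blast
next
  fix K assume K: "\<forall>U\<in>K. U \<subseteq> Xn \<and> (\<forall>a\<in>U. \<exists>e. admissible a e \<and> nbhd A a e \<subseteq> U)"
  have "\<exists>e. admissible x e \<and> nbhd A x e \<subseteq> \<Union>K" if x: "x \<in> \<Union>K" for x
  proof -
    obtain U where U: "U \<in> K" "x \<in> U" using x by blast
    then obtain e where "admissible x e" "nbhd A x e \<subseteq> U" using K by blast
    thus ?thesis using U by blast
  qed
  then show "\<forall>a\<in>\<Union>K. \<exists>e. admissible a e \<and> nbhd A a e \<subseteq> \<Union>K" by blast
qed

lemma openin_tauA:
  "openin (tauA A) U \<longleftrightarrow> U \<subseteq> Xn \<and> (\<forall>a\<in>U. \<exists>e. admissible a e \<and> nbhd A a e \<subseteq> U)"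
  unfolding tauA_def topology_inverse'[OF istopology_tauA] ..

end

theory Submission
  imports Defs
begin

(* On Pn \<union> A the topology tau(A) is the Euclidean one, while each b \<in> Ln - A has the
   neighbourhood {b} \<union> Pn, so Ln - A is a discrete subspace, and a set S \<subseteq> Ln is tau(A)-closed
   iff every Euclidean limit point of S lying in A belongs to S. In particular A is tau(A)-closed,
   and a subset of Ln - A is tau(A)-closed iff its Euclidean closure stays inside Ln - A.
   (a) If Ln - A is an F_sigma of Ln, an open U splits into U \<inter> (Pn \<union> A), open in the metrizable
   F_sigma subspace Pn \<union> A, and U \<inter> (Ln - A), a countable union of tau(A)-closed sets. Conversely,
   if tau(A) is perfect then Ln - A is an F_sigma of tau(A), and the Euclidean closures of its
   pieces stay inside Ln - A.
   (b) A closed subset of Ln - A is a closed discrete subspace. Conversely, an open cover has a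
   countable subfamily covering the Lindelof subspace Pn \<union> A, and the uncovered rest is a
   tau(A)-closed subset of Ln - A.
   (c) Pn \<union> A is a Euclidean F_sigma, hence a countable union of compacta. Conversely, a
   tau(A)-compact K is Euclidean compact and all limit points of K \<inter> Ln lie in A, so K \<inter> A is
   closed and K \<inter> (Ln - A) is countable. *)

lemma fsigma_in_continuous_map_preimage:
  assumes f: "continuous_map X Y f" and S: "fsigma_in Y S"
  shows "fsigma_in X {x \<in> topspace X. f x \<in> S}"
proof -
  obtain \<C> where \<C>: "countable \<C>" "\<C> \<subseteq> Collect (closedin Y)" "\<Union>\<C> = S"
    using S unfolding fsigma_in_def union_of_def by blast
  have "{x \<in> topspace X. f x \<in> S} = (\<Union>C\<in>\<C>. {x \<in> topspace X. f x \<in> C})"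
    using \<C>(3) by blast
  moreover have "fsigma_in X {x \<in> topspace X. f x \<in> C}" if "C \<in> \<C>" for C
    using that \<C>(2) f closedin_continuous_map_preimage closed_imp_fsigma_in by blast
  ultimately show ?thesis
    using \<C>(1) fsigma_in_Union[of "(\<lambda>C. {x \<in> topspace X. f x \<in> C}) ` \<C>" X] by auto
qed

lemma fsigma_imp_countable_Union_compact:
  fixes S :: "'a::{heine_borel,real_normed_vector} set"
  assumes "fsigma_in euclidean S"
  obtains \<K> where "countable \<K>" "\<And>K. K \<in> \<K> \<Longrightarrow> compact K" "\<Union>\<K> = S"
proof -
  obtain \<C> where \<C>: "countable \<C>" "\<C> \<subseteq> Collect (closedin euclidean)" "\<Union>\<C> = S"
    using assms unfolding fsigma_in_def union_of_def by blast
  define \<K> where "\<K> = (\<Union>C\<in>\<C>. range (\<lambda>n::nat. C \<inter> cball 0 (real n)))"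
  have "countable \<K>"
    unfolding \<K>_def by (rule countable_UN[OF \<C>(1)]) simp
  moreover have "compact K" if "K \<in> \<K>" for K
  proof -
    from that obtain C n where "C \<in> \<C>" and K: "K = C \<inter> cball 0 (real n)"
      unfolding \<K>_def by (elim UN_E rangeE)
    then have "closed C"
      using \<C>(2) closed_closedin by blast
    then show ?thesis
      unfolding K by (rule closed_Int_compact[OF _ compact_cball])
  qed
  moreover have "\<Union>\<K> = S"
  proof
    show "\<Union>\<K> \<subseteq> S"
      using \<C>(3) unfolding \<K>_def by auto
    show "S \<subseteq> \<Union>\<K>"
    proof
      fix x assume "x \<in> S"
      then obtain C where C: "C \<in> \<C>" "x \<in> C"
        using \<C>(3) by blast
      obtain n :: nat where "norm x \<le> real n"
        using real_arch_simple by blast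
      with C have "x \<in> C \<inter> cball 0 (real n)"
        by simp
      moreover have "C \<inter> cball 0 (real n) \<in> \<K>"
        unfolding \<K>_def by (rule UN_I[OF C(1) rangeI])
      ultimately show "x \<in> \<Union>\<K>"
        by (rule UnionI[rotated])
    qed
  qed
  ultimately show thesis
    using that by blast
qed

lemma Lindelof_space_discrete_topology: "Lindelof_space (discrete_topology U) \<longleftrightarrow> countable U"
proof
  assume L: "Lindelof_space (discrete_topology U)"
  have "\<exists>\<V>. countable \<V> \<and> \<V> \<subseteq> (\<lambda>x. {x}) ` U \<and> \<Union>\<V> = topspace (discrete_topology U)"
    by (rule Lindelof_spaceD[OF L]) auto
  then obtain \<V> where \<V>: "countable \<V>" "\<V> \<subseteq> (\<lambda>x. {x}) ` U" "\<Union>\<V> = U"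
    by auto
  have "countable (\<Union>V\<in>\<V>. V)"
    using \<V>(1,2) by (intro countable_UN) auto
  with \<V>(3) show "countable U"
    by simp
qed (rule countable_imp_Lindelof_space, simp)

lemma Lindelof_space_top_of_set: "Lindelof_space (top_of_set (S :: 'a::second_countable_topology set))"
  unfolding Lindelof_space_def
proof (intro allI impI)
  fix \<U> assume \<U>: "(\<forall>U\<in>\<U>. openin (top_of_set S) U) \<and> \<Union>\<U> = topspace (top_of_set S)"
  then have "\<And>U. U \<in> \<U> \<Longrightarrow> openin (top_of_set S) U"
    by blast
  then obtain \<V> where "\<V> \<subseteq> \<U>" "countable \<V>" "\<Union>\<V> = \<Union>\<U>"
    by (rule Lindelof_openin)
  with \<U> show "\<exists>\<V>. countable \<V> \<and> \<V> \<subseteq> \<U> \<and> \<Union>\<V> = topspace (top_of_set S)"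
    by (intro exI[of _ \<V>]) simp
qed

lemma countable_if_no_limpt_in_itself:
  fixes S :: "'a::second_countable_topology set"
  assumes "\<And>x. x \<in> S \<Longrightarrow> \<not> x islimpt S"
  shows "countable S"
proof -
  have "openin (top_of_set S) {x}" if x: "x \<in> S" for x
  proof -
    obtain T where "open T" "x \<in> T" "\<forall>y\<in>S. y \<in> T \<longrightarrow> y = x"
      using assms[OF x] unfolding islimpt_def by auto
    then have "{x} = S \<inter> T"
      using x by blast
    with \<open>open T\<close> show ?thesis
      using openin_open by blast
  qed
  then have "discrete_topology S = top_of_set S"
    by (simp add: discrete_topology_unique)
  then have "Lindelof_space (discrete_topology S)"
    using Lindelof_space_top_of_set[of S] by (simp only:)
  then show ?thesis
    by (simp only: Lindelof_space_discrete_topology)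
qed

lemma closed_Ln: "closed Ln"
  unfolding Ln_def by (intro closed_Collect_eq continuous_intros)

lemma open_Pn: "open Pn"
  unfolding Pn_def by (intro open_Collect_less continuous_intros)

lemma Pn_Int_Ln: "Pn \<inter> Ln = {}"
  by (auto simp: Pn_def Ln_def)

lemma ball_subset_Pn:
  assumes "0 < snd a" "e \<le> snd a"
  shows "ball a e \<subseteq> Pn"
proof
  fix y assume "y \<in> ball a e"
  then have "dist (snd a) (snd y) < snd a"
    using dist_snd_le[of a y] assms(2) by simp
  then show "y \<in> Pn"
    by (simp add: Pn_def dist_real_def abs_less_iff)
qed

lemma tangent_ball_subset_ball:
  assumes "a \<in> Ln" "0 < e"
  shows "ball (fst a, e) e \<subseteq> ball a (2 * e)"
proof
  fix y assume "y \<in> ball (fst a, e) e"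
  moreover have "dist a (fst a, e) = e"
    using assms by (cases a) (simp add: Ln_def dist_Pair_Pair dist_real_def)
  ultimately show "y \<in> ball a (2 * e)"
    using dist_triangle[of a y "(fst a, e)"] by simp
qed

lemma nbhd_subset_ball:
  assumes "x \<in> Xn" "0 < r"
  obtains e where "admissible x e" "nbhd A x e \<subseteq> ball x r \<inter> Xn"
proof (cases "x \<in> Pn")
  case True
  define e where "e = min r (snd x / 2)"
  have "0 < snd x"
    using True by (simp add: Pn_def)
  then have "admissible x e" "ball x e \<subseteq> Pn" "ball x e \<subseteq> ball x r"
    using assms(2) ball_subset_Pn[of x e] by (auto simp: admissible_def e_def)
  then show thesis
    using that True by (auto simp: nbhd_def Xn_def)
next
  case notP: False
  show thesis
  proof (cases "x \<in> A")
    case True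
    then show thesis
      using that notP assms(2) by (simp add: nbhd_def admissible_def)
  next
    case False
    have "x \<in> Ln"
      using assms(1) notP by (simp add: Xn_def)
    then have "ball (fst x, r / 2) (r / 2) \<subseteq> ball x r \<inter> Xn"
      using tangent_ball_subset_ball[of x "r / 2"] ball_subset_Pn[of "(fst x, r / 2)" "r / 2"] assms(2)
      by (auto simp: Xn_def)
    then have "nbhd A x (r / 2) \<subseteq> ball x r \<inter> Xn"
      using notP False assms by (simp add: nbhd_def tball_def)
    then show thesis
      using that[of "r / 2"] notP assms(2) by (simp add: admissible_def)
  qed
qed

lemma openin_tauA_Int_Xn: "open S \<Longrightarrow> openin (tauA A) (S \<inter> Xn)"
  unfolding openin_tauA
proof (intro conjI ballI)
  fix x assume "open S" "x \<in> S \<inter> Xn"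
  then obtain r where "0 < r" "ball x r \<subseteq> S"
    using open_contains_ball by blast
  moreover obtain e where "admissible x e" "nbhd A x e \<subseteq> ball x r \<inter> Xn"
    using nbhd_subset_ball \<open>x \<in> S \<inter> Xn\<close> \<open>0 < r\<close> by blast
  ultimately show "\<exists>e. admissible x e \<and> nbhd A x e \<subseteq> S \<inter> Xn"
    by blast
qed auto

lemma topspace_tauA: "topspace (tauA A) = Xn"
proof
  show "topspace (tauA A) \<subseteq> Xn"
    using openin_topspace[of "tauA A"] unfolding openin_tauA by blast
  show "Xn \<subseteq> topspace (tauA A)"
    using openin_tauA_Int_Xn[of UNIV A] openin_subset by fastforce
qed

lemma continuous_map_tauA_id:
  fixes A :: "((real^'m) \<times> real) set"
  shows "continuous_map (tauA A) euclidean id"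
  unfolding continuous_map_def topspace_tauA
proof (intro conjI allI impI)
  fix U :: "((real^'m) \<times> real) set"
  assume "openin euclidean U"
  moreover have "{x \<in> Xn. id x \<in> U} = U \<inter> Xn"
    by auto
  ultimately show "openin (tauA A) {x \<in> Xn. id x \<in> U}"
    using openin_tauA_Int_Xn by simp
qed simp

lemma openin_tauA_Pn: "openin (tauA A) Pn"
  using openin_tauA_Int_Xn[OF open_Pn] by (simp add: Xn_def Int_absorb2)

lemma openin_tauA_insert_Pn:
  assumes "b \<in> Ln" "b \<notin> A"
  shows "openin (tauA A) (insert b Pn)"
  unfolding openin_tauA
proof (intro conjI ballI)
  show "insert b Pn \<subseteq> Xn"
    using assms by (auto simp: Xn_def)
  fix a assume "a \<in> insert b Pn"
  then consider "a = b" | "a \<in> Pn"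
    by blast
  then show "\<exists>e. admissible a e \<and> nbhd A a e \<subseteq> insert b Pn"
  proof cases
    case 1
    have "b \<notin> Pn"
      using assms(1) Pn_Int_Ln by blast
    then have "admissible b 1 \<and> nbhd A b 1 \<subseteq> insert b Pn"
      using assms ball_subset_Pn[of "(fst b, 1)" 1] by (auto simp: admissible_def nbhd_def tball_def)
    with 1 show ?thesis
      by blast
  next
    case 2
    then show ?thesis
      using openin_tauA_Pn[of A] unfolding openin_tauA by blast
  qed
qed

lemma openin_tauA_imp_ball:
  assumes "openin (tauA A) U" "x \<in> U" "x \<in> Pn \<union> A"
  obtains e where "0 < e" "ball x e \<inter> Xn \<subseteq> U"
proof -
  obtain e where e: "admissible x e" "nbhd A x e \<subseteq> U"
    using assms(1,2) unfolding openin_tauA by blast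
  have "ball x e \<inter> Xn \<subseteq> nbhd A x e"
    using assms(3) by (auto simp: nbhd_def)
  with e show thesis
    using that by (auto simp: admissible_def)
qed

lemma subtopology_tauA_Pn_Un_A:
  assumes "A \<subseteq> Ln"
  shows "subtopology (tauA A) (Pn \<union> A) = top_of_set (Pn \<union> A)"
proof -
  have PX: "Pn \<union> A \<subseteq> Xn"
    using assms by (auto simp: Xn_def)
  have "openin (subtopology (tauA A) (Pn \<union> A)) U \<longleftrightarrow> openin (top_of_set (Pn \<union> A)) U" for U
  proof
    assume "openin (subtopology (tauA A) (Pn \<union> A)) U"
    then obtain V where V: "openin (tauA A) V" "U = V \<inter> (Pn \<union> A)"
      by (auto simp: openin_subtopology)
    have "\<exists>e>0. \<forall>y\<in>Pn \<union> A. dist y x < e \<longrightarrow> y \<in> U" if x: "x \<in> U" for x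
    proof -
      obtain e where e: "0 < e" "ball x e \<inter> Xn \<subseteq> V"
        by (rule openin_tauA_imp_ball[OF V(1), of x]) (use x V(2) in auto)
      have "y \<in> U" if "y \<in> Pn \<union> A" "dist y x < e" for y
        using that e(2) PX V(2) by (auto simp: dist_commute)
      with e(1) show ?thesis
        by blast
    qed
    then show "openin (top_of_set (Pn \<union> A)) U"
      using V(2) by (auto simp: openin_euclidean_subtopology_iff)
  next
    assume "openin (top_of_set (Pn \<union> A)) U"
    then obtain T where "open T" "U = (T \<inter> Xn) \<inter> (Pn \<union> A)"
      using PX by (auto simp: openin_open)
    then show "openin (subtopology (tauA A) (Pn \<union> A)) U"
      using openin_subtopology_Int[OF openin_tauA_Int_Xn] by blast
  qed
  then show ?thesis
    by (simp add: topology_eq)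
qed

lemma subtopology_tauA_discrete:
  assumes "S \<subseteq> Ln - A"
  shows "subtopology (tauA A) S = discrete_topology S"
proof -
  have "openin (subtopology (tauA A) S) {x}" if "x \<in> S" for x
  proof -
    have "openin (subtopology (tauA A) S) (insert x Pn \<inter> S)"
      using that assms by (intro openin_subtopology_Int openin_tauA_insert_Pn) auto
    moreover have "insert x Pn \<inter> S = {x}"
      using that assms Pn_Int_Ln by auto
    ultimately show ?thesis
      by simp
  qed
  moreover have "topspace (subtopology (tauA A) S) = S"
    using assms by (auto simp: topspace_tauA Xn_def)
  ultimately show ?thesis
    by (metis discrete_topology_unique)
qed

lemma closedin_tauA_subset_Ln:
  assumes "A \<subseteq> Ln" "S \<subseteq> Ln"
  shows "closedin (tauA A) S \<longleftrightarrow> closure S \<inter> A \<subseteq> S"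
proof
  assume cl: "closedin (tauA A) S"
  show "closure S \<inter> A \<subseteq> S"
  proof
    fix x assume x: "x \<in> closure S \<inter> A"
    show "x \<in> S"
    proof (rule ccontr)
      assume "x \<notin> S"
      have "openin (tauA A) (Xn - S)"
        using cl by (simp add: closedin_def topspace_tauA)
      then obtain e where "0 < e" "ball x e \<inter> Xn \<subseteq> Xn - S"
        by (rule openin_tauA_imp_ball) (use x \<open>x \<notin> S\<close> assms(1) in \<open>auto simp: Xn_def\<close>)
      moreover obtain y where "y \<in> S" "dist y x < e"
        using x \<open>0 < e\<close> closure_approachable by blast
      ultimately show False
        using assms(2) by (auto simp: Xn_def dist_commute)
    qed
  qed
next
  assume clA: "closure S \<inter> A \<subseteq> S"
  \<comment> \<open>Points of A outside S are Euclidean-far from S; the others have the neighbourhood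
     Pn or insert b Pn.\<close>
  have "Xn - S = (- closure S \<inter> Xn) \<union> Pn \<union> (\<Union>b\<in>Ln - A - S. insert b Pn)"
    using assms clA closure_subset[of S] Pn_Int_Ln by (auto simp: Xn_def)
  moreover have "openin (tauA A) (\<Union>b\<in>Ln - A - S. insert b Pn)"
    using openin_tauA_insert_Pn by (intro openin_Union) auto
  moreover have "openin (tauA A) (- closure S \<inter> Xn)"
    by (intro openin_tauA_Int_Xn open_Compl closed_closure)
  ultimately have "openin (tauA A) (Xn - S)"
    using openin_tauA_Pn[of A] by (metis openin_Un)
  then show "closedin (tauA A) S"
    using assms(2) by (auto simp: closedin_def topspace_tauA Xn_def)
qed

lemma closedin_tauA_A: "A \<subseteq> Ln \<Longrightarrow> closedin (tauA A) A"
  using closedin_tauA_subset_Ln by blast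

lemma closedin_tauA_subset_Ln_minus_A:
  assumes "A \<subseteq> Ln" "S \<subseteq> Ln - A"
  shows "closedin (tauA A) S \<longleftrightarrow> closure S \<subseteq> Ln - A"
proof -
  have "closure S \<subseteq> Ln"
    using assms(2) closure_minimal[OF _ closed_Ln] by blast
  then show ?thesis
    using closedin_tauA_subset_Ln[OF assms(1), of S] assms(2) by blast
qed

lemma compact_if_compactin_tauA: "compactin (tauA A) K \<Longrightarrow> compact K"
  using image_compactin[OF _ continuous_map_tauA_id] by fastforce

lemma compactin_tauA_limpt_Ln:
  assumes "A \<subseteq> Ln" "compactin (tauA A) K" "x islimpt (K \<inter> Ln)"
  shows "x \<in> A"
proof (rule ccontr)
  assume "x \<notin> A"
  \<comment> \<open>T can only miss its limit point x, which is not in A; so T is tau(A)-closed, hence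
     compact and Euclidean closed, although x is a limit point of T.\<close>
  define T where "T = K \<inter> Ln - {x}"
  have "closed K"
    using assms(2) compact_if_compactin_tauA compact_imp_closed by blast
  then have "closure T \<subseteq> K \<inter> Ln"
    unfolding T_def using closed_Ln by (intro closure_minimal) auto
  then have "closure T \<inter> A \<subseteq> T"
    using \<open>x \<notin> A\<close> by (auto simp: T_def)
  then have "closedin (tauA A) T"
    using closedin_tauA_subset_Ln[OF assms(1), of T] by (auto simp: T_def)
  then have "closed T"
    using closed_compactin[OF assms(2)] compact_if_compactin_tauA compact_imp_closed
    by (metis Diff_subset Int_lower1 T_def subset_trans)
  moreover have "x islimpt T"
    using islimpt_subset[OF assms(3)] islimpt_insert[of x x T] by (auto simp: T_def)
  ultimately have "x \<in> T"
    using closed_limpt by blast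
  then show False
    by (simp add: T_def)
qed

lemma fsigma_in_tauA_Pn_Un_A:
  assumes "A \<subseteq> Ln"
  shows "fsigma_in (tauA A) (Pn \<union> A)"
proof -
  have "fsigma_in euclidean Pn"
    by (simp add: open_imp_fsigma_in metrizable_space_euclidean open_Pn)
  then have "fsigma_in (tauA A) {x \<in> topspace (tauA A). id x \<in> Pn}"
    by (rule fsigma_in_continuous_map_preimage[OF continuous_map_tauA_id])
  moreover have "{x \<in> topspace (tauA A). id x \<in> Pn} = Pn"
    by (auto simp: topspace_tauA Xn_def)
  ultimately show ?thesis
    using closedin_tauA_A[OF assms] by (metis closed_imp_fsigma_in fsigma_in_Un)
qed

lemma fsigma_in_tauA_openin_Int_Pn_Un_A:
  assumes "A \<subseteq> Ln" "openin (tauA A) U"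
  shows "fsigma_in (tauA A) (U \<inter> (Pn \<union> A))"
proof -
  have "openin (top_of_set (Pn \<union> A)) (U \<inter> (Pn \<union> A))"
    using openin_subtopology_Int[OF assms(2)] subtopology_tauA_Pn_Un_A[OF assms(1)] by metis
  then have "fsigma_in (top_of_set (Pn \<union> A)) (U \<inter> (Pn \<union> A))"
    by (rule open_imp_fsigma_in[OF metrizable_space_subtopology[OF metrizable_space_euclidean]])
  then show ?thesis
    using fsigma_in_fsigma_subtopology[OF fsigma_in_tauA_Pn_Un_A[OF assms(1)]]
      subtopology_tauA_Pn_Un_A[OF assms(1)] by simp
qed

lemma fsigma_in_Ln_if_fsigma_in_tauA:
  assumes "A \<subseteq> Ln" "fsigma_in (tauA A) (Ln - A)"
  shows "fsigma_in (top_of_set Ln) (Ln - A)"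
proof -
  obtain \<F> where \<F>: "countable \<F>" "\<F> \<subseteq> Collect (closedin (tauA A))" "\<Union>\<F> = Ln - A"
    using assms(2) unfolding fsigma_in_def union_of_def by blast
  have closure_F: "closure F \<subseteq> Ln - A" if F: "F \<in> \<F>" for F
  proof -
    have "F \<subseteq> Ln - A"
      using \<F>(3) F by blast
    with \<F>(2) F show ?thesis
      using closedin_tauA_subset_Ln_minus_A[OF assms(1)] by blast
  qed
  have "Ln - A = (\<Union>F\<in>\<F>. closure F)"
  proof
    show "Ln - A \<subseteq> (\<Union>F\<in>\<F>. closure F)"
      using \<F>(3) closure_subset by blast
    show "(\<Union>F\<in>\<F>. closure F) \<subseteq> Ln - A"
      using closure_F by auto
  qed
  moreover have "fsigma_in (top_of_set Ln) (\<Union>F\<in>\<F>. closure F)"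
  proof (rule fsigma_in_Union)
    show "countable (closure ` \<F>)"
      using \<F>(1) by simp
    show "fsigma_in (top_of_set Ln) S" if "S \<in> closure ` \<F>" for S
      using that closure_F by (auto intro!: closed_imp_fsigma_in closed_subset)
  qed
  ultimately show ?thesis
    by simp
qed

lemma gdelta_in_Ln_if_perfect_tauA:
  assumes "A \<subseteq> Ln" "perfect_top (tauA A)"
  shows "gdelta_in (top_of_set Ln) A"
proof -
  have "gdelta_in (tauA A) A"
    using assms closedin_tauA_A unfolding perfect_top_def by blast
  then have "fsigma_in (tauA A) (Xn - A)"
    by (simp add: gdelta_in_fsigma_in topspace_tauA)
  moreover have "closedin (tauA A) Ln"
    using closedin_tauA_subset_Ln[OF assms(1), of Ln] by (simp add: closure_closed[OF closed_Ln])
  ultimately have "fsigma_in (tauA A) ((Xn - A) \<inter> Ln)"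
    by (rule fsigma_in_Int[OF _ closed_imp_fsigma_in])
  moreover have "(Xn - A) \<inter> Ln = Ln - A"
    by (auto simp: Xn_def)
  ultimately have "fsigma_in (top_of_set Ln) (Ln - A)"
    using fsigma_in_Ln_if_fsigma_in_tauA[OF assms(1)] by simp
  then show ?thesis
    using assms(1) by (simp add: gdelta_in_fsigma_in)
qed

lemma fsigma_in_tauA_subset_Ln_minus_A:
  assumes "A \<subseteq> Ln" "fsigma_in (top_of_set Ln) (Ln - A)" "S \<subseteq> Ln - A"
  shows "fsigma_in (tauA A) S"
proof -
  obtain \<C> where \<C>: "countable \<C>" "\<C> \<subseteq> Collect (closedin (top_of_set Ln))" "\<Union>\<C> = Ln - A"
    using assms(2) unfolding fsigma_in_def union_of_def by auto
  have "closedin (tauA A) (C \<inter> S)" if C: "C \<in> \<C>" for C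
  proof -
    have "closed C"
      using \<C>(2) C closedin_closed_trans closed_Ln by blast
    then have "closure (C \<inter> S) \<subseteq> C"
      by (simp add: closure_minimal)
    moreover have "C \<subseteq> Ln - A"
      using \<C>(3) C by blast
    ultimately show ?thesis
      using closedin_tauA_subset_Ln_minus_A[OF assms(1), of "C \<inter> S"] by blast
  qed
  then have "fsigma_in (tauA A) (\<Union>C\<in>\<C>. C \<inter> S)"
    using \<C>(1) by (intro fsigma_in_Union) (auto intro!: closed_imp_fsigma_in)
  moreover have "(\<Union>C\<in>\<C>. C \<inter> S) = S"
    using \<C>(3) assms(3) by blast
  ultimately show ?thesis
    by simp
qed

lemma perfect_tauA_if_gdelta_in_Ln:
  assumes "A \<subseteq> Ln" "gdelta_in (top_of_set Ln) A"
  shows "perfect_top (tauA A)"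
  unfolding perfect_top_def
proof (intro allI impI)
  fix Cl assume Cl: "closedin (tauA A) Cl"
  define U where "U = Xn - Cl"
  have U: "openin (tauA A) U"
    using Cl by (simp add: U_def closedin_def topspace_tauA)
  have "fsigma_in (top_of_set Ln) (Ln - A)"
    using assms(2) by (simp add: gdelta_in_fsigma_in)
  then have "fsigma_in (tauA A) (U \<inter> (Ln - A))"
    by (rule fsigma_in_tauA_subset_Ln_minus_A[OF assms(1)]) blast
  moreover have "U = U \<inter> (Pn \<union> A) \<union> U \<inter> (Ln - A)"
    by (auto simp: U_def Xn_def)
  ultimately have "fsigma_in (tauA A) U"
    using fsigma_in_tauA_openin_Int_Pn_Un_A[OF assms(1) U] by (metis fsigma_in_Un)
  moreover have "Cl \<subseteq> Xn"
    using closedin_subset[OF Cl] by (simp add: topspace_tauA)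
  ultimately show "gdelta_in (tauA A) Cl"
    by (simp add: gdelta_in_fsigma_in U_def topspace_tauA)
qed

lemma countable_closed_if_Lindelof_tauA:
  assumes "A \<subseteq> Ln" "Lindelof_space (tauA A)" "C \<subseteq> Ln - A" "closedin (top_of_set Ln) C"
  shows "countable C"
proof -
  have "closed C"
    using assms(4) closed_Ln closedin_closed_trans by blast
  then have "closedin (tauA A) C"
    using closedin_tauA_subset_Ln_minus_A[OF assms(1,3)] assms(3) by simp
  then have "Lindelof_space (discrete_topology C)"
    using Lindelof_space_closedin_subtopology[OF assms(2)] subtopology_tauA_discrete[OF assms(3)]
    by metis
  then show ?thesis
    by (simp add: Lindelof_space_discrete_topology)
qed

lemma countable_subcover_Pn_Un_A:
  assumes "A \<subseteq> Ln" "\<forall>U\<in>\<U>. openin (tauA A) U" "Pn \<union> A \<subseteq> \<Union>\<U>"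
  obtains \<V> where "countable \<V>" "\<V> \<subseteq> \<U>" "Pn \<union> A \<subseteq> \<Union>\<V>"
proof -
  have PX: "Pn \<union> A \<subseteq> topspace (tauA A)"
    using assms(1) by (auto simp: topspace_tauA Xn_def)
  have "Lindelof_space (subtopology (tauA A) (Pn \<union> A))"
    by (simp add: subtopology_tauA_Pn_Un_A[OF assms(1)] Lindelof_space_top_of_set)
  then have L: "\<forall>\<U>. (\<forall>U\<in>\<U>. openin (tauA A) U) \<and> Pn \<union> A \<subseteq> \<Union>\<U>
               \<longrightarrow> (\<exists>\<V>. countable \<V> \<and> \<V> \<subseteq> \<U> \<and> Pn \<union> A \<subseteq> \<Union>\<V>)"
    unfolding Lindelof_space_subtopology_subset[OF PX] .
  have "(\<forall>U\<in>\<U>. openin (tauA A) U) \<and> Pn \<union> A \<subseteq> \<Union>\<U>"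
    using assms(2,3) by (rule conjI)
  then have "\<exists>\<V>. countable \<V> \<and> \<V> \<subseteq> \<U> \<and> Pn \<union> A \<subseteq> \<Union>\<V>"
    by (rule mp[OF spec[OF L, of \<U>]])
  then show thesis
    using that by blast
qed

lemma Lindelof_tauA_if_countable_closed:
  assumes "A \<subseteq> Ln"
    and countable_closed: "\<And>C. C \<subseteq> Ln - A \<Longrightarrow> closedin (top_of_set Ln) C \<Longrightarrow> countable C"
  shows "Lindelof_space (tauA A)"
  unfolding Lindelof_space_alt
proof (intro allI impI)
  fix \<U> assume \<U>: "(\<forall>U\<in>\<U>. openin (tauA A) U) \<and> topspace (tauA A) \<subseteq> \<Union>\<U>"
  then have opens: "\<forall>U\<in>\<U>. openin (tauA A) U" and cover: "Xn \<subseteq> \<Union>\<U>"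
    by (simp_all add: topspace_tauA)
  have "Pn \<union> A \<subseteq> \<Union>\<U>"
    using cover assms(1) by (auto simp: Xn_def)
  then obtain \<V> where \<V>: "countable \<V>" "\<V> \<subseteq> \<U>" "Pn \<union> A \<subseteq> \<Union>\<V>"
    by (rule countable_subcover_Pn_Un_A[OF assms(1) opens])
  define R where "R = topspace (tauA A) - \<Union>\<V>"
  have "openin (tauA A) (\<Union>\<V>)"
    by (rule openin_Union) (use opens \<V>(2) in blast)
  then have "closedin (tauA A) R"
    unfolding R_def by (rule closedin_diff[OF closedin_topspace])
  moreover have "R \<subseteq> Ln - A"
    using \<V>(3) by (auto simp: R_def topspace_tauA Xn_def)
  ultimately have "closure R \<subseteq> Ln - A"
    using closedin_tauA_subset_Ln_minus_A[OF assms(1)] by blast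
  then have "countable (closure R)"
    by (intro countable_closed closed_subset) auto
  then have "countable R"
    by (rule countable_subset[OF closure_subset])
  have "\<forall>x\<in>R. \<exists>U. U \<in> \<U> \<and> x \<in> U"
    using cover unfolding R_def topspace_tauA by blast
  then obtain g where g: "\<And>x. x \<in> R \<Longrightarrow> g x \<in> \<U> \<and> x \<in> g x"
    by metis
  show "\<exists>\<W>. countable \<W> \<and> \<W> \<subseteq> \<U> \<and> topspace (tauA A) \<subseteq> \<Union>\<W>"
  proof (intro exI conjI)
    show "countable (\<V> \<union> g ` R)"
      using \<V>(1) \<open>countable R\<close> by simp
    show "\<V> \<union> g ` R \<subseteq> \<U>"
      using \<V>(2) g by blast
    show "topspace (tauA A) \<subseteq> \<Union>(\<V> \<union> g ` R)"
      using g unfolding R_def by blast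
  qed
qed

lemma sigma_compact_tauA_if_fsigma_countable:
  assumes "A \<subseteq> Ln" "fsigma_in (top_of_set Ln) A" "countable (Ln - A)"
  shows "sigma_compact_space (tauA A)"
proof -
  have "fsigma_in euclidean Pn"
    by (rule open_imp_fsigma_in[OF metrizable_space_euclidean]) (simp add: open_Pn)
  moreover have "fsigma_in euclidean Ln"
    by (rule closed_imp_fsigma_in) (simp add: closed_Ln flip: closed_closedin)
  then have "fsigma_in euclidean A"
    using fsigma_in_fsigma_subtopology[of euclidean Ln A] assms(1,2) by simp
  ultimately have "fsigma_in euclidean (Pn \<union> A)"
    by (rule fsigma_in_Un)
  then obtain \<K> where \<K>: "countable \<K>" "\<And>K. K \<in> \<K> \<Longrightarrow> compact K" "\<Union>\<K> = Pn \<union> A"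
    by (rule fsigma_imp_countable_Union_compact) blast
  have compactin_K: "compactin (tauA A) K" if "K \<in> \<K>" for K
  proof -
    have "compactin (top_of_set (Pn \<union> A)) K"
      using \<K> that by (auto simp: compactin_subtopology)
    then have "compactin (subtopology (tauA A) (Pn \<union> A)) K"
      by (simp only: subtopology_tauA_Pn_Un_A[OF assms(1)])
    then show ?thesis
      using compactin_subtopology by blast
  qed
  show ?thesis
    unfolding sigma_compact_space_def
  proof (intro exI conjI ballI)
    show "countable (\<K> \<union> (\<lambda>x. {x}) ` (Ln - A))"
      using \<K>(1) assms(3) by simp
    show "compactin (tauA A) K" if "K \<in> \<K> \<union> (\<lambda>x. {x}) ` (Ln - A)" for K
      using that compactin_K by (auto simp: topspace_tauA Xn_def)
    show "\<Union>(\<K> \<union> (\<lambda>x. {x}) ` (Ln - A)) = topspace (tauA A)"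
      using \<K>(3) assms(1) by (auto simp: topspace_tauA Xn_def)
  qed
qed

lemma closed_Int_A_if_compactin_tauA:
  assumes "A \<subseteq> Ln" "compactin (tauA A) K"
  shows "closed (K \<inter> A)"
  unfolding closed_limpt
proof (intro allI impI)
  fix x assume x: "x islimpt (K \<inter> A)"
  have "closed K"
    using assms(2) compact_if_compactin_tauA compact_imp_closed by blast
  then have "x \<in> K"
    using islimpt_subset[OF x, of K] closed_limpt by blast
  moreover have "x \<in> A"
    using compactin_tauA_limpt_Ln[OF assms] islimpt_subset[OF x, of "K \<inter> Ln"] assms(1) by blast
  ultimately show "x \<in> K \<inter> A"
    by blast
qed

lemma countable_Int_Ln_minus_A_if_compactin_tauA:
  assumes "A \<subseteq> Ln" "compactin (tauA A) K"
  shows "countable (K \<inter> (Ln - A))"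
proof (rule countable_if_no_limpt_in_itself)
  fix x assume "x \<in> K \<inter> (Ln - A)"
  then show "\<not> x islimpt (K \<inter> (Ln - A))"
    using compactin_tauA_limpt_Ln[OF assms] islimpt_subset[of x "K \<inter> (Ln - A)" "K \<inter> Ln"] by blast
qed

lemma fsigma_countable_if_sigma_compact_tauA:
  assumes "A \<subseteq> Ln" "sigma_compact_space (tauA A)"
  shows "fsigma_in (top_of_set Ln) A \<and> countable (Ln - A)"
proof -
  obtain \<K> where \<K>: "countable \<K>" "\<forall>K\<in>\<K>. compactin (tauA A) K" "\<Union>\<K> = Xn"
    using assms(2) unfolding sigma_compact_space_def topspace_tauA by blast
  have "fsigma_in (top_of_set Ln) (\<Union>K\<in>\<K>. K \<inter> A)"
    using \<K>(1,2) closed_Int_A_if_compactin_tauA[OF assms(1)] assms(1)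
    by (intro fsigma_in_Union) (auto intro!: closed_imp_fsigma_in closed_subset)
  moreover have "(\<Union>K\<in>\<K>. K \<inter> A) = A"
    using \<K>(3) assms(1) by (auto simp: Xn_def)
  moreover have "countable (\<Union>K\<in>\<K>. K \<inter> (Ln - A))"
    using \<K>(1,2) countable_Int_Ln_minus_A_if_compactin_tauA[OF assms(1)] by (intro countable_UN) auto
  moreover have "(\<Union>K\<in>\<K>. K \<inter> (Ln - A)) = Ln - A"
    using \<K>(3) by (auto simp: Xn_def)
  ultimately show ?thesis
    by simp
qed

theorem mainTheorem5:
  fixes A :: "((real^'m) \<times> real) set"
  assumes "A \<subseteq> Ln"
  shows "(perfect_top (tauA A) \<longleftrightarrow> gdelta_in (top_of_set Ln) A)
       \<and> (Lindelof_space (tauA A) \<longleftrightarrow>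
            \<not> (\<exists>C. C \<subseteq> Ln - A \<and> closedin (top_of_set Ln) C \<and> uncountable C))
       \<and> (sigma_compact_space (tauA A) \<longleftrightarrow>
            fsigma_in (top_of_set Ln) A \<and> countable (Ln - A))"
proof (intro conjI)
  show "perfect_top (tauA A) \<longleftrightarrow> gdelta_in (top_of_set Ln) A"
    using gdelta_in_Ln_if_perfect_tauA[OF assms] perfect_tauA_if_gdelta_in_Ln[OF assms] by blast
  show "Lindelof_space (tauA A) \<longleftrightarrow>
          \<not> (\<exists>C. C \<subseteq> Ln - A \<and> closedin (top_of_set Ln) C \<and> uncountable C)" (is "?L \<longleftrightarrow> ?R")
  proof
    show ?R if ?L
      using countable_closed_if_Lindelof_tauA[OF assms that] by blast
    show ?L if ?R
      by (rule Lindelof_tauA_if_countable_closed[OF assms]) (use that in blast)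
  qed
  show "sigma_compact_space (tauA A) \<longleftrightarrow> fsigma_in (top_of_set Ln) A \<and> countable (Ln - A)"
    using fsigma_countable_if_sigma_compact_tauA[OF assms] sigma_compact_tauA_if_fsigma_countable[OF assms]
    by blast
qed

end
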